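(* Let $M$ be as in the context and let $\Gamma_1,\Gamma_2$ be piecewise $C^1$ cuts. If $\Gamma_1$ is homologous to $\Gamma_2$, then $\Gamma_{1,\mathrm{odd}}=\Gamma_{2,\mathrm{odd}}$.
   Context: $M$ is a compact oriented Riemannian surface with piecewise $C^1$ (possibly empty) boundary $\partial M$. A $C^1$ curve is regular if its velocity never vanishes. A closed set $\Gamma\subset M$ is a piecewise $C^1$ cut if it is the image of a finite set of regular $C^1$ curves that intersect one another (and $\partial M$) transversely, and only do so at their endpoints. Such a cut is represented by the singular chain $\sum_a\gamma_a\in C_1(M;\mathbb Z_2)$ of its curves; cuts $\Gamma_1,\Gamma_2$ are homologous if represented by chains $\gamma_1,\gamma_2$ with $[\gamma_1-\gamma_2]=0\in H_1(M,\partial M;\mathbb Z_2)$. For a piecewise $C^1$ cut $\Gamma$, $\Gamma_{\mathrm{odd}}$ denotes the set of points in the interior of $M$ at which an odd number of the curves composing $\Gamma$ terminate. *)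

theory Defs
  imports "HOL-Analysis.Analysis" "HOL-Homology.Homology"
begin

text \<open>Local models in the plane: the whole plane (interior points), a closed
half plane (smooth boundary points), and closed wedges of angle pi/2 and 3 pi/2
(convex resp. reflex corners of the piecewise C1 boundary; by a linear change of
coordinates every non-degenerate corner angle reduces to one of these).\<close>

definition half_plane :: "(real^2) set" where
  "half_plane = {x. 0 \<le> x$2}"

definition quadrant :: "(real^2) set" where
  "quadrant = {x. 0 \<le> x$1 \<and> 0 \<le> x$2}"

definition three_quarter_plane :: "(real^2) set" where
  "three_quarter_plane = {x. 0 \<le> x$1 \<or> 0 \<le> x$2}"

definition surface_models :: "(real^2) set set" where
  "surface_models = {UNIV, half_plane, quadrant, three_quarter_plane}"

definition surface_chart ::
  "'a::euclidean_space set \<Rightarrow> (real^2) set \<Rightarrow> (real^2) set \<Rightarrow> (real^2 \<Rightarrow> 'a)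
     \<Rightarrow> (real^2 \<Rightarrow> ((real^2) \<Rightarrow>\<^sub>L 'a)) \<Rightarrow> bool" where
  "surface_chart M K W \<psi> D \<longleftrightarrow>
     K \<in> surface_models \<and> open W \<and>
     (\<forall>x\<in>W. (\<psi> has_derivative blinfun_apply (D x)) (at x) \<and> inj (blinfun_apply (D x))) \<and>
     continuous_on W D \<and>
     (\<exists>U g. open U \<and> homeomorphism (W \<inter> K) (M \<inter> U) \<psi> g)"

definition surface_boundary :: "'a::euclidean_space set \<Rightarrow> 'a set" where
  "surface_boundary M =
     {p. \<exists>K W \<psi> D x. surface_chart M K W \<psi> D \<and> x \<in> W \<inter> frontier K \<and> \<psi> x = p}"

definition oriented_atlas ::
  "'a::euclidean_space set \<Rightarrow>
    ((real^2) set \<times> (real^2) set \<times> (real^2 \<Rightarrow> 'a) \<times> (real^2 \<Rightarrow> ((real^2) \<Rightarrow>\<^sub>L 'a))) set \<Rightarrow> bool" where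
  "oriented_atlas M \<A> \<longleftrightarrow>
     (\<forall>(K, W, \<psi>, D)\<in>\<A>. surface_chart M K W \<psi> D) \<and>
     (\<forall>p\<in>M. \<exists>(K, W, \<psi>, D)\<in>\<A>. \<exists>x\<in>W \<inter> K. \<psi> x = p) \<and>
     (\<forall>(K1, W1, \<psi>1, D1)\<in>\<A>. \<forall>(K2, W2, \<psi>2, D2)\<in>\<A>.
        \<forall>x1\<in>W1 \<inter> K1. \<forall>x2\<in>W2 \<inter> K2. \<psi>1 x1 = \<psi>2 x2 \<longrightarrow>
          (\<exists>L::real^2^2. 0 < det L \<and>
             blinfun_apply (D1 x1) = blinfun_apply (D2 x2) \<circ> (\<lambda>v. L *v v)))"

definition compact_oriented_pw_C1_surface :: "'a::euclidean_space set \<Rightarrow> bool" where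
  "compact_oriented_pw_C1_surface M \<longleftrightarrow> compact M \<and> (\<exists>\<A>. oriented_atlas M \<A>)"

definition regular_C1_curve :: "(real \<Rightarrow> 'a::euclidean_space) \<Rightarrow> bool" where
  "regular_C1_curve \<gamma> \<longleftrightarrow>
     (\<exists>\<gamma>'. continuous_on {0..1} \<gamma>' \<and>
        (\<forall>t\<in>{0..1}. (\<gamma> has_vector_derivative \<gamma>' t) (at t within {0..1}) \<and> \<gamma>' t \<noteq> 0))"

definition velocity :: "(real \<Rightarrow> 'a::euclidean_space) \<Rightarrow> real \<Rightarrow> 'a" where
  "velocity \<gamma> t = vector_derivative \<gamma> (at t within {0..1})"

definition tangent_dirs :: "'a::euclidean_space set \<Rightarrow> 'a \<Rightarrow> 'a set" where
  "tangent_dirs S p = {v. \<exists>\<beta> \<epsilon>. 0 < \<epsilon> \<and> \<beta> ` {0..\<epsilon>} \<subseteq> S \<and> \<beta> 0 = p \<and>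
                          (\<beta> has_vector_derivative v) (at 0 within {0..\<epsilon>})}"

definition pw_C1_cut :: "'a::euclidean_space set \<Rightarrow> 'i set \<Rightarrow> ('i \<Rightarrow> real \<Rightarrow> 'a) \<Rightarrow> bool" where
  "pw_C1_cut M A \<gamma> \<longleftrightarrow>
     finite A \<and>
     (\<forall>a\<in>A. regular_C1_curve (\<gamma> a) \<and> \<gamma> a ` {0..1} \<subseteq> M) \<and>
     \<comment> \<open>intersections (also self-intersections) only at endpoints\<close>
     (\<forall>a\<in>A. \<forall>b\<in>A. \<forall>s\<in>{0..1}. \<forall>t\<in>{0..1}.
        \<gamma> a s = \<gamma> b t \<and> (a \<noteq> b \<or> s \<noteq> t) \<longrightarrow> s \<in> {0, 1} \<and> t \<in> {0, 1}) \<and>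
     \<comment> \<open>distinct curves meet transversely\<close>
     (\<forall>a\<in>A. \<forall>b\<in>A. \<forall>s\<in>{0, 1}. \<forall>t\<in>{0, 1}.
        a \<noteq> b \<and> \<gamma> a s = \<gamma> b t \<longrightarrow> \<not> (\<exists>c. velocity (\<gamma> a) s = c *\<^sub>R velocity (\<gamma> b) t)) \<and>
     \<comment> \<open>curves meet the boundary only at endpoints, transversely\<close>
     (\<forall>a\<in>A. \<forall>t\<in>{0..1}. \<gamma> a t \<in> surface_boundary M \<longrightarrow>
        t \<in> {0, 1} \<and>
        velocity (\<gamma> a) t \<notin> {c *\<^sub>R w | c w. w \<in> tangent_dirs (surface_boundary M) (\<gamma> a t)})"

definition path_simplex :: "(real \<Rightarrow> 'a) \<Rightarrow> (nat \<Rightarrow> real) \<Rightarrow> 'a" where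
  "path_simplex \<gamma> = restrict (\<lambda>x. \<gamma> (x 1)) (standard_simplex 1)"

definition cut_chain :: "'i set \<Rightarrow> ('i \<Rightarrow> real \<Rightarrow> 'a) \<Rightarrow> 'a chain" where
  "cut_chain A \<gamma> = (\<Sum>a\<in>A. frag_of (path_simplex (\<gamma> a)))"

text \<open>[c] = 0 in H_1(M, bdry M; Z2), written with integer chains: c is, modulo
twice an integral chain, a relative boundary.\<close>

definition zero_in_rel_H1_Z2 :: "'a::euclidean_space set \<Rightarrow> 'a set \<Rightarrow> 'a chain \<Rightarrow> bool" where
  "zero_in_rel_H1_Z2 M B c \<longleftrightarrow>
     (\<exists>e. singular_chain 1 (top_of_set M) e \<and>
          singular_relboundary 1 (top_of_set M) B (c - frag_cmul 2 e))"

definition cuts_homologous ::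
  "'a::euclidean_space set \<Rightarrow> 'i set \<Rightarrow> ('i \<Rightarrow> real \<Rightarrow> 'a) \<Rightarrow> 'j set \<Rightarrow> ('j \<Rightarrow> real \<Rightarrow> 'a) \<Rightarrow> bool" where
  "cuts_homologous M A1 \<gamma>1 A2 \<gamma>2 \<longleftrightarrow>
     zero_in_rel_H1_Z2 M (surface_boundary M) (cut_chain A1 \<gamma>1 - cut_chain A2 \<gamma>2)"

text \<open>Gamma_odd: interior points at which an odd number of curve-ends lie
(a closed curve based at p contributes two ends).\<close>

definition cut_odd :: "'a::euclidean_space set \<Rightarrow> 'i set \<Rightarrow> ('i \<Rightarrow> real \<Rightarrow> 'a) \<Rightarrow> 'a set" where
  "cut_odd M A \<gamma> = {p \<in> M - surface_boundary M.
      odd (card {(a, e). a \<in> A \<and> e \<in> {0::real, 1} \<and> \<gamma> a e = p})}"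

end

theory Submission
  imports Defs
begin

text \<open>At a point p, the boundary of a cut chain has coefficient (number of curves
ending at p) - (number starting at p), which has the parity of the number of
curve-ends at p. If the difference of two cut chains is, modulo 2, a boundary
relative to \<open>\<partial>M\<close>, then its boundary is, modulo 2, a chain in \<open>\<partial>M\<close> and so has
even coefficient at every interior point.\<close>

definition point_simplex :: "'a \<Rightarrow> (nat \<Rightarrow> real) \<Rightarrow> 'a" where
  "point_simplex q = restrict (\<lambda>_. q) (standard_simplex 0)"

lemma point_simplex_image: "point_simplex q ` standard_simplex 0 = {q}"
proof -
  have "(\<lambda>i. if i = 0 then 1 else 0::real) \<in> standard_simplex 0"
    by (simp add: standard_simplex_def)
  then show ?thesis
    unfolding point_simplex_def image_restrict_eq by blast
qed

lemma point_simplex_eq_iff [simp]: "point_simplex p = point_simplex q \<longleftrightarrow> p = q"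
  by (metis point_simplex_image singleton_inject)

lemma chain_boundary_path_simplex:
  "chain_boundary 1 (frag_of (path_simplex g))
     = frag_of (point_simplex (g 1)) - frag_of (point_simplex (g 0))"
proof -
  have "singular_face 1 k (path_simplex g) = point_simplex (g (1 - real k))"
    if "k \<le> 1" for k
  proof -
    have "simplical_face k x \<in> standard_simplex 1 \<and> simplical_face k x 1 = 1 - real k"
      if "x \<in> standard_simplex 0" for x
      using simplical_face_in_standard_simplex[of 1 k x] \<open>k \<le> 1\<close> that
      by (auto simp: simplical_face_def standard_simplex_def le_Suc_eq)
    then show ?thesis
      by (auto simp: singular_face_def path_simplex_def point_simplex_def fun_eq_iff)
  qed
  then show ?thesis
    by (simp add: chain_boundary_of)
qed

lemma lookup_chain_boundary_cut_chain:
  "Poly_Mapping.lookup (chain_boundary 1 (cut_chain A \<gamma>)) (point_simplex p)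
     = (\<Sum>a\<in>A. of_bool (\<gamma> a 1 = p) - of_bool (\<gamma> a 0 = p))"
  unfolding cut_chain_def chain_boundary_sum
  by (auto simp: lookup_sum chain_boundary_path_simplex [simplified] lookup_minus intro!: sum.cong)

definition end_count :: "'i set \<Rightarrow> ('i \<Rightarrow> real \<Rightarrow> 'a) \<Rightarrow> 'a \<Rightarrow> nat" where
  "end_count A \<gamma> p = card {(a, e). a \<in> A \<and> e \<in> {0::real, 1} \<and> \<gamma> a e = p}"

lemma int_end_count:
  assumes "finite A"
  shows "int (end_count A \<gamma> p)
     = (\<Sum>a\<in>A. of_bool (\<gamma> a 0 = p) + of_bool (\<gamma> a 1 = p))"
proof -
  have "{(a, e). a \<in> A \<and> e \<in> {0::real, 1} \<and> \<gamma> a e = p}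
      = Sigma A (\<lambda>a. {e \<in> {0, 1}. \<gamma> a e = p})"
    by auto
  moreover have "card {e \<in> {0::real, 1}. \<gamma> a e = p}
      = of_bool (\<gamma> a 0 = p) + of_bool (\<gamma> a 1 = p)" for a
  proof -
    have "{e \<in> {0::real, 1}. \<gamma> a e = p}
        = (if \<gamma> a 0 = p then {0} else {}) \<union> (if \<gamma> a 1 = p then {1} else {})"
      by auto
    then show ?thesis
      by simp
  qed
  ultimately show ?thesis
    using assms by (simp add: end_count_def card_SigmaI)
qed

lemma even_end_count_iff_even_boundary_coefficient:
  assumes "finite A"
  shows "even (end_count A \<gamma> p)
     \<longleftrightarrow> even (Poly_Mapping.lookup (chain_boundary 1 (cut_chain A \<gamma>)) (point_simplex p))"
proof -
  have "int (end_count A \<gamma> p)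
      = Poly_Mapping.lookup (chain_boundary 1 (cut_chain A \<gamma>)) (point_simplex p)
        + 2 * (\<Sum>a\<in>A. of_bool (\<gamma> a 0 = p))"
    unfolding int_end_count[OF assms] lookup_chain_boundary_cut_chain sum_distrib_left
      sum.distrib [symmetric]
    by (rule sum.cong) auto
  then show ?thesis
    by (metis even_add even_of_nat dvd_triv_left)
qed

lemma lookup_point_simplex_subtopology_chain:
  assumes "singular_chain 0 (subtopology X S) z" and "p \<notin> S"
  shows "Poly_Mapping.lookup z (point_simplex p) = 0"
proof (rule ccontr)
  assume "Poly_Mapping.lookup z (point_simplex p) \<noteq> 0"
  then have "singular_simplex 0 (subtopology X S) (point_simplex p)"
    using assms(1) by (auto simp: singular_chain_def in_keys_iff)
  then show False
    using assms(2) by (simp add: singular_simplex_subtopology point_simplex_image)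
qed

lemma lookup_chain_boundary_relboundary:
  assumes "singular_relboundary 1 X S c" and "p \<notin> S"
  shows "Poly_Mapping.lookup (chain_boundary 1 c) (point_simplex p) = 0"
proof -
  have "singular_chain 0 (subtopology X S) (chain_boundary 1 c)"
    using singular_relboundary_imp_relcycle[OF assms(1)] by (simp add: singular_relcycle)
  then show ?thesis
    using assms(2) by (rule lookup_point_simplex_subtopology_chain)
qed

lemma even_boundary_coefficient_if_zero_in_rel_H1_Z2:
  assumes "zero_in_rel_H1_Z2 M B c" and "p \<notin> B"
  shows "even (Poly_Mapping.lookup (chain_boundary 1 c) (point_simplex p))"
proof -
  obtain e where "singular_relboundary 1 (top_of_set M) B (c - frag_cmul 2 e)"
    using assms(1) by (auto simp: zero_in_rel_H1_Z2_def)
  then have "Poly_Mapping.lookup (chain_boundary 1 (c - frag_cmul 2 e)) (point_simplex p) = 0"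
    using assms(2) by (rule lookup_chain_boundary_relboundary)
  then have "Poly_Mapping.lookup (chain_boundary 1 c) (point_simplex p)
      = 2 * Poly_Mapping.lookup (chain_boundary 1 e) (point_simplex p)"
    by (simp add: chain_boundary_diff chain_boundary_cmul lookup_minus)
  then show ?thesis
    by simp
qed

theorem proposition3p7:
  fixes M :: "'a::euclidean_space set"
    and A1 :: "'i set" and \<gamma>1 :: "'i \<Rightarrow> real \<Rightarrow> 'a"
    and A2 :: "'j set" and \<gamma>2 :: "'j \<Rightarrow> real \<Rightarrow> 'a"
  assumes "compact_oriented_pw_C1_surface M"
    and "pw_C1_cut M A1 \<gamma>1"
    and "pw_C1_cut M A2 \<gamma>2"
    and "cuts_homologous M A1 \<gamma>1 A2 \<gamma>2"
  shows "cut_odd M A1 \<gamma>1 = cut_odd M A2 \<gamma>2"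
proof -
  have "finite A1" "finite A2"
    using assms(2,3) by (auto simp: pw_C1_cut_def)
  have "even (end_count A1 \<gamma>1 p) \<longleftrightarrow> even (end_count A2 \<gamma>2 p)"
    if "p \<notin> surface_boundary M" for p
  proof -
    have "even (Poly_Mapping.lookup (chain_boundary 1 (cut_chain A1 \<gamma>1 - cut_chain A2 \<gamma>2))
                  (point_simplex p))"
      using even_boundary_coefficient_if_zero_in_rel_H1_Z2 assms(4) that
      by (simp add: cuts_homologous_def)
    then show ?thesis
      using \<open>finite A1\<close> \<open>finite A2\<close>
      by (simp add: even_end_count_iff_even_boundary_coefficient chain_boundary_diff
          lookup_minus)
  qed
  then show ?thesis
    unfolding cut_odd_def end_count_def [symmetric] by blast
qed

end
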